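(* Let $M_d$ denote the algebra of complex $d\times d$ matrices and $id$ the identity map on $M_d$. Let $P:M_d\to M_d$ be a completely positive linear map and, for $t\ge0$, let $B_t:M_d\to M_d$ be completely positive linear maps. Let $V_t$, $t\ge 0$, be the solution of $$\frac{dV_t}{dt} = P V_t + \int_0^t ds\, B_{t-s} V_s,\qquad \lim_{t\to0}V_t = id.$$ Then $V_t$ is completely positive for all $t\ge0$. Moreover, if $V_t(\mathbf{1}_d)>0$ (positive definite) for all $t\ge0$, then the maps $$A_t(a) = V_t(\mathbf{1}_d)^{-1/2}\,V_t(a)\,V_t(\mathbf{1}_d)^{-1/2},\qquad a\in M_d,$$ are completely positive and satisfy $A_t(\mathbf{1}_d)=\mathbf{1}_d$ for all $t\ge 0$.
   Context: $\mathbf{1}_d$ is the identity matrix. Products of maps such as $P V_t$ denote composition of linear maps on $M_d$. A linear map $\Phi:M_d\to M_d$ is completely positive if $\Phi\otimes id_{M_n}$ is positive for every $n$. *)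

theory Defs
  imports "HOL-Analysis.Analysis"
begin

text \<open>M_d is rendered as complex^'d^'d (d = CARD('d)).\<close>

type_synonym 'd cmat = "complex^'d^'d"

definition cscale :: "complex \<Rightarrow> ('d::finite) cmat \<Rightarrow> ('d::finite) cmat" where
  "cscale c A = (\<chi> i j. c * A $ i $ j)"

definition clinear_map :: "(('d::finite) cmat \<Rightarrow> ('d::finite) cmat) \<Rightarrow> bool" where
  "clinear_map f \<longleftrightarrow>
     (\<forall>A B. f (A + B) = f A + f B) \<and> (\<forall>c A. f (cscale c A) = cscale c (f A))"

definition qform :: "complex^'d \<Rightarrow> ('d::finite) cmat \<Rightarrow> complex^'d \<Rightarrow> complex" where
  "qform x M y = (\<Sum>k\<in>UNIV. cnj (x $ k) * (M *v y) $ k)"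

definition psd :: "('d::finite) cmat \<Rightarrow> bool" where
  "psd M \<longleftrightarrow> (\<forall>x. Im (qform x M x) = 0 \<and> 0 \<le> Re (qform x M x))"

definition pos_def :: "('d::finite) cmat \<Rightarrow> bool" where
  "pos_def M \<longleftrightarrow> (\<forall>x. Im (qform x M x) = 0 \<and> (x \<noteq> 0 \<longrightarrow> 0 < Re (qform x M x)))"

text \<open>Elements of M_n(M_d): block matrices X i j (i, j < n), each block in M_d.
  Positivity = positive semidefiniteness of the (n d) x (n d) matrix.\<close>
definition block_psd :: "nat \<Rightarrow> (nat \<Rightarrow> nat \<Rightarrow> ('d::finite) cmat) \<Rightarrow> bool" where
  "block_psd n X \<longleftrightarrow>
     (\<forall>x :: nat \<Rightarrow> complex^'d.
        Im (\<Sum>i<n. \<Sum>j<n. qform (x i) (X i j) (x j)) = 0 \<and>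
        0 \<le> Re (\<Sum>i<n. \<Sum>j<n. qform (x i) (X i j) (x j)))"

text \<open>Complete positivity: Phi \<otimes> id_{M_n} is positive for every n.
  (Phi \<otimes> id_{M_n}) applied to the block matrix [X_ij] is [Phi(X_ij)].\<close>
definition completely_positive :: "(('d::finite) cmat \<Rightarrow> ('d::finite) cmat) \<Rightarrow> bool" where
  "completely_positive \<Phi> \<longleftrightarrow>
     (\<forall>n X. block_psd n X \<longrightarrow> block_psd n (\<lambda>i j. \<Phi> (X i j)))"

definition psd_sqrt :: "('d::finite) cmat \<Rightarrow> ('d::finite) cmat" where
  "psd_sqrt M = (THE R. psd R \<and> R ** R = M)"

definition inv_sqrt :: "('d::finite) cmat \<Rightarrow> ('d::finite) cmat" where
  "inv_sqrt M = matrix_inv (psd_sqrt M)"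

end

theory Submission
  imports Defs
begin

text \<open>
  For every \<open>n\<close>, \<open>V\<^sub>t\<close> maps accretive block matrices \<open>X \<in> M\<^sub>n(M\<^sub>d)\<close> (those with
  \<open>X + X\<^sup>* \<ge> 0\<close>) to accretive ones; for a linear map this already gives complete positivity.
  Fix such an \<open>X\<close> and consider the barrier \<open>Y\<^sub>s = V\<^sub>s(X) + \<epsilon> e\<^sup>\<lambda>\<^sup>s 1\<close>. It is accretive at
  \<open>s = 0\<close>, and as long as it is accretive on \<open>[0, \<tau>]\<close> its derivative at \<open>\<tau>\<close> is coercive:
  the completely positive maps \<open>P\<close> and \<open>B\<^sub>\<tau>\<^sub>-\<^sub>s\<close> keep the accretive parts of
  \<open>Y\<^sub>\<tau>\<close> and \<open>Y\<^sub>s\<close> accretive, and their effect on the shifts \<open>\<epsilon> e\<^sup>\<lambda>\<^sup>s 1\<close> is dominated by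
  the growth of the shift once \<open>\<lambda>\<close> is large. A continuous induction over \<open>[0, T]\<close> keeps
  \<open>Y\<close> accretive, and \<open>\<epsilon> \<rightarrow> 0\<close> gives the claim.

  The normalised maps are congruences of \<open>V\<^sub>t\<close> by the hermitian matrix
  \<open>V\<^sub>t(1)\<^sup>-\<^sup>1\<^sup>/\<^sup>2\<close>. That the positive square root is well defined is shown with the monotone
  iteration \<open>Z \<mapsto> (N + Z\<^sup>2)/2\<close>, which converges to \<open>1 - \<surd>(1 - N)\<close> for \<open>0 \<le> N \<le> 1\<close>.
\<close>

section \<open>Adjoints, sesquilinear forms and positive matrices\<close>

definition adj :: "('d::finite) cmat \<Rightarrow> 'd cmat" where
  "adj M = (\<chi> i j. cnj (M $ j $ i))"

definition hermitian :: "('d::finite) cmat \<Rightarrow> bool" where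
  "hermitian A \<longleftrightarrow> adj A = A"

lemma adj_adj [simp]: "adj (adj A) = A"
  unfolding adj_def by (simp add: vec_eq_iff)

lemma adj_mult: "adj (A ** B) = adj B ** adj A"
  unfolding adj_def matrix_matrix_mult_def by (simp add: vec_eq_iff mult.commute)

lemma adj_add: "adj (A + B) = adj A + adj B"
  unfolding adj_def by (simp add: vec_eq_iff)

lemma adj_diff: "adj (A - B) = adj A - adj B"
  unfolding adj_def by (simp add: vec_eq_iff)

lemma adj_scaleR: "adj (c *\<^sub>R A) = c *\<^sub>R adj A"
  unfolding adj_def by (simp add: vec_eq_iff)

lemma adj_mat_1 [simp]: "adj (mat 1) = mat 1"
  unfolding adj_def mat_def by (simp add: vec_eq_iff)

lemma adj_0 [simp]: "adj 0 = 0"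
  unfolding adj_def by (simp add: vec_eq_iff)

lemma matrix_diff_ldistrib: "(A::'a::ring_1^'n^'m) ** (B - C) = A ** B - A ** C"
  by (simp add: vec_eq_iff matrix_matrix_mult_def sum_subtractf algebra_simps)

lemma matrix_add_rdistrib: "((B::'a::semiring_1^'n^'m) + C) ** A = B ** A + C ** A"
  by (simp add: vec_eq_iff matrix_matrix_mult_def sum.distrib algebra_simps)

lemma matrix_diff_rdistrib: "((B::'a::ring_1^'n^'m) - C) ** A = B ** A - C ** A"
  by (simp add: vec_eq_iff matrix_matrix_mult_def sum_subtractf algebra_simps)

lemma matrix_mult_scaleR_right: "(A::('d::finite) cmat) ** (c *\<^sub>R B) = c *\<^sub>R (A ** B)"
  by (simp add: matrix_matrix_mult_def vec_eq_iff scaleR_sum_right del: scaleR_conv_of_real)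

lemma matrix_mult_scaleR_left: "(c *\<^sub>R A) ** (B::('d::finite) cmat) = c *\<^sub>R (A ** B)"
  by (simp add: matrix_matrix_mult_def vec_eq_iff scaleR_sum_right del: scaleR_conv_of_real)

lemma scaleR_eq_cscale: "c *\<^sub>R A = cscale (of_real c) A"
  unfolding cscale_def vec_eq_iff
  by (simp del: scaleR_conv_of_real add: scaleR_conv_of_real[of c "A$_$_"])

lemma qform_double_sum: "qform x M y = (\<Sum>k\<in>UNIV. \<Sum>l\<in>UNIV. cnj (x$k) * M$k$l * y$l)"
  unfolding qform_def matrix_vector_mult_def by (simp add: sum_distrib_left mult.assoc)

lemma qform_add: "qform x (A + B) y = qform x A y + qform x B y"
  unfolding qform_double_sum by (simp add: algebra_simps sum.distrib)

lemma qform_cscale: "qform x (cscale c A) y = c * qform x A y"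
  unfolding qform_double_sum cscale_def by (simp add: sum_distrib_left algebra_simps)

lemma qform_scaleR: "qform x (c *\<^sub>R A) y = of_real c * qform x A y"
  by (simp add: scaleR_eq_cscale qform_cscale)

lemma qform_0 [simp]: "qform x 0 y = 0"
  unfolding qform_double_sum by simp

lemma qform_0_left [simp]: "qform 0 M y = 0"
  unfolding qform_double_sum by simp

lemma qform_diff: "qform x (A - B) y = qform x A y - qform x B y"
  unfolding qform_double_sum by (simp add: algebra_simps sum_subtractf)

lemma qform_add_left: "qform (x + x') M y = qform x M y + qform x' M y"
  unfolding qform_def by (simp add: algebra_simps sum.distrib)

lemma qform_add_right: "qform x M (y + y') = qform x M y + qform x M y'"
  unfolding qform_def by (simp add: algebra_simps sum.distrib matrix_vector_right_distrib)

lemma qform_mat_1: "qform x (mat 1) x = of_real ((norm x)\<^sup>2)"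
proof -
  have "qform x (mat 1) x = (\<Sum>k\<in>UNIV. of_real ((cmod (x$k))\<^sup>2))"
    unfolding qform_def matrix_vector_mul_lid
    by (intro sum.cong refl) (metis complex_norm_square mult.commute of_real_power)
  also have "\<dots> = of_real ((norm x)\<^sup>2)"
    by (simp add: norm_vec_def L2_set_def sum_nonneg)
  finally show ?thesis .
qed

lemma qform_adj: "qform x (adj M) y = cnj (qform y M x)"
  unfolding qform_double_sum adj_def
  by (simp add: sum_distrib_left, subst sum.swap) (simp add: mult.commute mult.left_commute)

lemma qform_mult_right: "qform x (A ** B) y = qform x A (B *v y)"
  unfolding qform_def matrix_vector_mul_assoc ..

lemma qform_mult_left: "qform x (A ** B) y = qform (adj A *v x) B y"
proof -
  have "(\<Sum>k\<in>UNIV. cnj (x$k) * (A *v w)$k) = (\<Sum>l\<in>UNIV. cnj ((adj A *v x)$l) * w$l)" for w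
    unfolding matrix_vector_mult_def adj_def
    by (simp add: sum_distrib_left sum_distrib_right mult_ac, subst sum.swap) simp
  then show ?thesis
    unfolding qform_def matrix_vector_mul_assoc[symmetric] .
qed

lemma qform_sandwich: "qform x (adj A ** M ** C) y = qform (A *v x) M (C *v y)"
  by (subst qform_mult_right) (simp add: qform_mult_left)

lemma norm_qform_le:
  fixes M :: "('d::finite) cmat"
  shows "cmod (qform x M y) \<le> of_nat (CARD('d) * CARD('d)) * norm x * norm M * norm y"
proof -
  have "cmod (qform x M y) \<le> (\<Sum>k\<in>UNIV. \<Sum>l\<in>UNIV. cmod (cnj (x$k) * M$k$l * y$l))"
    unfolding qform_double_sum by (rule order_trans[OF norm_sum sum_mono]) (rule norm_sum)
  also have "\<dots> \<le> (\<Sum>k\<in>(UNIV::'d set). \<Sum>l\<in>(UNIV::'d set). norm x * norm M * norm y)"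
  proof (intro sum_mono)
    fix k l
    have "norm (M$k$l) \<le> norm M"
      by (rule order_trans[OF Finite_Cartesian_Product.norm_nth_le Finite_Cartesian_Product.norm_nth_le])
    then show "cmod (cnj (x$k) * M$k$l * y$l) \<le> norm x * norm M * norm y"
      unfolding norm_mult complex_mod_cnj by (intro mult_mono Finite_Cartesian_Product.norm_nth_le) auto
  qed
  finally show ?thesis by simp
qed

lemma bounded_linear_qform: "bounded_linear (\<lambda>M::('d::finite) cmat. qform x M y)"
proof (rule bounded_linear_intro[where K="of_nat (CARD('d) * CARD('d)) * norm x * norm y"])
  fix r and A :: "'d cmat"
  show "qform x (r *\<^sub>R A) y = r *\<^sub>R qform x A y"
    by (simp add: qform_scaleR del: scaleR_conv_of_real) (simp add: scaleR_conv_of_real)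
  show "norm (qform x A y) \<le> norm A * (of_nat (CARD('d) * CARD('d)) * norm x * norm y)"
    using norm_qform_le[of x A y] by (simp add: algebra_simps)
qed (rule qform_add)

lemma qform_axis: "qform (axis a \<alpha>) M (axis b \<beta>) = cnj \<alpha> * M$a$b * \<beta>"
proof -
  have "qform (axis a \<alpha>) M (axis b \<beta>)
      = (\<Sum>k\<in>UNIV. \<Sum>l\<in>UNIV. if k = a then if l = b then cnj \<alpha> * M$k$l * \<beta> else 0 else 0)"
    unfolding qform_double_sum by (intro sum.cong refl) (auto simp: axis_def)
  also have "\<dots> = (\<Sum>k\<in>UNIV. if k = a then cnj \<alpha> * M$k$b * \<beta> else 0)"
    by (intro sum.cong refl) auto
  finally show ?thesis by simp
qed

lemma polarization:
  fixes A :: "('d::finite) cmat"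
  defines "q \<equiv> \<lambda>x. qform x A x"
  shows "2 * A$a$b = q (axis a 1 + axis b 1) - q (axis a 1) - q (axis b 1)
      - \<i> * (q (axis a 1 + axis b \<i>) - q (axis a 1) - q (axis b 1))"
proof -
  have "cnj \<i> * A$b$b * \<i> = (cnj \<i> * \<i>) * A$b$b" by (simp only: mult_ac)
  then have "q (axis b \<i>) = q (axis b 1)" unfolding q_def qform_axis by simp
  then show ?thesis
    unfolding q_def qform_add_left qform_add_right qform_axis
    by (simp add: algebra_simps)
qed

lemma qform_diag_eq_0_imp: "(\<And>x. qform x A x = 0) \<Longrightarrow> A = 0"
  using polarization[of A] by (simp add: vec_eq_iff)

lemma hermitian_iff_qform_real: "hermitian A \<longleftrightarrow> (\<forall>x. Im (qform x A x) = 0)"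
proof
  assume "hermitian A"
  then show "\<forall>x. Im (qform x A x) = 0"
    using qform_adj[of _ A] unfolding hermitian_def by (metis Reals_cnj_iff complex_is_Real_iff)
next
  assume real: "\<forall>x. Im (qform x A x) = 0"
  have "qform x (A - adj A) x = 0" for x
    using real unfolding qform_diff qform_adj by (simp add: complex_eq_iff)
  then have "A - adj A = 0"
    by (rule qform_diag_eq_0_imp)
  then show "hermitian A"
    unfolding hermitian_def right_minus_eq by (rule sym)
qed

lemma hermitian_qform_of_real: "hermitian A \<Longrightarrow> qform x A x = of_real (Re (qform x A x))"
  by (simp add: complex_eq_iff hermitian_iff_qform_real)

lemma hermitian_0 [simp]: "hermitian 0"
  by (simp add: hermitian_def)

lemma hermitian_add: "hermitian A \<Longrightarrow> hermitian B \<Longrightarrow> hermitian (A + B)"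
  by (simp add: hermitian_def adj_add)

lemma hermitian_diff: "hermitian A \<Longrightarrow> hermitian B \<Longrightarrow> hermitian (A - B)"
  by (simp add: hermitian_def adj_diff)

lemma hermitian_scaleR: "hermitian A \<Longrightarrow> hermitian (c *\<^sub>R A)"
  by (simp add: hermitian_def adj_scaleR del: scaleR_conv_of_real)

lemma hermitian_square_eq_0_imp:
  assumes "hermitian A" and "A ** A = 0"
  shows "A = 0"
proof (rule qform_diag_eq_0_imp)
  fix x
  have "of_real ((norm (A *v x))\<^sup>2) = qform x (adj A ** mat 1 ** A) x"
    unfolding qform_sandwich qform_mat_1 ..
  also have "\<dots> = 0"
    using assms unfolding hermitian_def by (metis matrix_mul_rid qform_0)
  finally have "A *v x = 0" by simp
  then show "qform x A x = 0" by (simp add: qform_def)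
qed

lemma psd_hermitian: "psd A \<Longrightarrow> hermitian A"
  unfolding psd_def hermitian_iff_qform_real by blast

lemma pos_def_imp_psd: "pos_def A \<Longrightarrow> psd A"
  unfolding pos_def_def psd_def by (metis less_imp_le order.refl qform_0_left zero_complex.sel(1))

lemma psd_0 [simp]: "psd 0"
  unfolding psd_def by simp

lemma psd_mat_1: "psd (mat 1)"
  unfolding psd_def qform_mat_1 by simp

lemma psd_add: "psd A \<Longrightarrow> psd B \<Longrightarrow> psd (A + B)"
  unfolding psd_def qform_add by simp

lemma psd_scaleR: "psd A \<Longrightarrow> 0 \<le> c \<Longrightarrow> psd (c *\<^sub>R A)"
  unfolding psd_def qform_scaleR by simp

lemma psd_congruence: "psd A \<Longrightarrow> psd (adj H ** A ** H)"
  unfolding psd_def qform_sandwich by simp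

lemma psd_hermitian_congruence: "psd A \<Longrightarrow> hermitian H \<Longrightarrow> psd (H ** A ** H)"
  using psd_congruence[of A H] by (simp add: hermitian_def)

section \<open>Square roots of positive semidefinite matrices\<close>

fun matpow :: "('d::finite) cmat \<Rightarrow> nat \<Rightarrow> 'd cmat" where
  "matpow N 0 = mat 1"
| "matpow N (Suc j) = N ** matpow N j"

lemma matpow_add: "matpow N (i + j) = matpow N i ** matpow N j"
  by (induction i) (auto simp: matrix_mul_assoc)

lemma matpow_commute_if: "R ** N = N ** R \<Longrightarrow> R ** matpow N j = matpow N j ** R"
  by (induction j) (auto, metis matrix_mul_assoc)

lemma matpow_commute: "N ** matpow N j = matpow N j ** N"
  by (rule matpow_commute_if) (rule refl)

lemma hermitian_matpow: "hermitian N \<Longrightarrow> hermitian (matpow N j)"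
  unfolding hermitian_def by (induction j) (auto simp: adj_mult matpow_commute)

text \<open>\<open>nonneg_poly N A a\<close> says that \<open>A = p(N)\<close> for a polynomial \<open>p\<close> with nonnegative
  coefficients and \<open>p(1) = a\<close>.\<close>

inductive nonneg_poly :: "('d::finite) cmat \<Rightarrow> 'd cmat \<Rightarrow> real \<Rightarrow> bool" for N where
  power: "nonneg_poly N (matpow N j) 1"
| zero: "nonneg_poly N 0 0"
| add: "nonneg_poly N A a \<Longrightarrow> nonneg_poly N B b \<Longrightarrow> nonneg_poly N (A + B) (a + b)"
| scale: "nonneg_poly N A a \<Longrightarrow> 0 \<le> c \<Longrightarrow> nonneg_poly N (c *\<^sub>R A) (c * a)"

lemma nonneg_poly_matpow_mult: "nonneg_poly N B b \<Longrightarrow> nonneg_poly N (matpow N i ** B) b"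
proof (induction rule: nonneg_poly.induct)
  case (power j)
  then show ?case using nonneg_poly.power[of N "i + j"] by (simp add: matpow_add)
qed (simp_all add: matrix_add_ldistrib matrix_mult_scaleR_right nonneg_poly.intros
       del: scaleR_conv_of_real)

lemma nonneg_poly_mult:
  "nonneg_poly N A a \<Longrightarrow> nonneg_poly N B b \<Longrightarrow> nonneg_poly N (A ** B) (a * b)"
proof (induction rule: nonneg_poly.induct)
  case (power j)
  then show ?case using nonneg_poly_matpow_mult by simp
next
  case (scale A a c)
  then show ?case
    using nonneg_poly.scale[of N "A ** B" "a * b" c]
    by (simp add: matrix_mult_scaleR_left mult.assoc del: scaleR_conv_of_real)
qed (simp_all add: matrix_add_rdistrib distrib_right nonneg_poly.intros)

lemma nonneg_poly_commute_if:
  "nonneg_poly N A a \<Longrightarrow> R ** N = N ** R \<Longrightarrow> R ** A = A ** R"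
  by (induction rule: nonneg_poly.induct)
     (simp_all add: matpow_commute_if matrix_add_ldistrib matrix_add_rdistrib
       matrix_mult_scaleR_left matrix_mult_scaleR_right del: scaleR_conv_of_real)

lemma nonneg_poly_commute: "nonneg_poly N A a \<Longrightarrow> nonneg_poly N B b \<Longrightarrow> A ** B = B ** A"
  by (metis nonneg_poly_commute_if)

lemma nonneg_poly_hermitian: "nonneg_poly N A a \<Longrightarrow> hermitian N \<Longrightarrow> hermitian A"
  by (induction rule: nonneg_poly.induct)
     (simp_all add: hermitian_matpow hermitian_add hermitian_scaleR)

context
  fixes N :: "('d::finite) cmat"
  assumes psd_N: "psd N" and psd_1_N: "psd (mat 1 - N)"
begin

lemma psd_N_minus_square: "psd (N - N ** N)"
proof -
  have "N - N ** N = (mat 1 - N) ** N ** (mat 1 - N) + N ** (mat 1 - N) ** N"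
    by (simp add: matrix_diff_ldistrib matrix_diff_rdistrib matrix_mul_assoc algebra_simps)
  then show ?thesis
    using psd_hermitian psd_add psd_hermitian_congruence psd_N psd_1_N by metis
qed

text \<open>Write \<open>N\<^sup>j\<close> as \<open>N\<^sup>m N\<^sup>m\<close> or \<open>N\<^sup>m N N\<^sup>m\<close> and use congruence.\<close>

lemma psd_matpow_antimono: "psd (matpow N j) \<and> psd (matpow N j - matpow N (Suc j))"
proof -
  have h: "hermitian (matpow N m)" for m
    by (rule hermitian_matpow[OF psd_hermitian[OF psd_N]])
  have sandwich: "matpow N (m + k + m) = matpow N m ** matpow N k ** matpow N m" for m k
    by (simp add: matpow_add matrix_mul_assoc)
  have one: "matpow N 1 = N" and two: "matpow N 2 = N ** N"
    by (simp_all add: numeral_2_eq_2)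
  have "\<exists>m. j = m + 0 + m \<or> j = m + 1 + m"
    by presburger
  then obtain m where "j = m + 0 + m \<or> j = m + 1 + m"
    by blast
  then consider "j = m + 0 + m" "Suc j = m + 1 + m" | "j = m + 1 + m" "Suc j = m + 2 + m"
    by auto
  then show ?thesis
  proof cases
    case 1
    then show ?thesis
      using psd_hermitian_congruence[OF psd_mat_1 h] psd_hermitian_congruence[OF psd_1_N h]
      by (simp only: sandwich one matpow.simps matrix_diff_ldistrib matrix_diff_rdistrib)
  next
    case 2
    then show ?thesis
      using psd_hermitian_congruence[OF psd_N h]
        psd_hermitian_congruence[OF psd_N_minus_square h]
      by (simp only: sandwich one two matrix_diff_ldistrib matrix_diff_rdistrib)
  qed
qed

lemma qform_matpow_le: "Re (qform x (matpow N j) x) \<le> (norm x)\<^sup>2"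
proof (induction j)
  case (Suc j)
  have "0 \<le> Re (qform x (matpow N j - matpow N (Suc j)) x)"
    using psd_matpow_antimono[of j] unfolding psd_def by blast
  then show ?case using Suc unfolding qform_diff by simp
qed (simp add: qform_mat_1)

lemma nonneg_poly_psd_le:
  "nonneg_poly N A a \<Longrightarrow> psd A \<and> Re (qform x A x) \<le> a * (norm x)\<^sup>2"
proof (induction rule: nonneg_poly.induct)
  case (scale A a c)
  have "Re (qform x (c *\<^sub>R A) x) = c * Re (qform x A x)"
    by (simp add: qform_scaleR)
  also have "\<dots> \<le> c * (a * (norm x)\<^sup>2)"
    using scale by (intro mult_left_mono) auto
  finally show ?case
    using scale psd_scaleR[of A c] by (simp add: mult.assoc)
next
  case (add A a B b)
  then show ?case
    by (simp add: psd_add qform_add distrib_right)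
qed (simp_all add: psd_matpow_antimono qform_matpow_le)

end

lemma tendsto_matrix_mult:
  fixes f g :: "'a \<Rightarrow> ('d::finite) cmat"
  assumes "(f \<longlongrightarrow> A) F" and "(g \<longlongrightarrow> B) F"
  shows "((\<lambda>x. f x ** g x) \<longlongrightarrow> A ** B) F"
  unfolding matrix_matrix_mult_def
  by (auto intro!: vec_tendstoI tendsto_intros assms)

lemma tendsto_adj:
  fixes f :: "'a \<Rightarrow> ('d::finite) cmat"
  assumes "(f \<longlongrightarrow> A) F"
  shows "((\<lambda>x. adj (f x)) \<longlongrightarrow> adj A) F"
  unfolding adj_def by (auto intro!: vec_tendstoI tendsto_intros assms)

text \<open>The quadratic forms converge by monotonicity, and polarization recovers the entries.\<close>

lemma hermitian_incseq_bounded_convergent: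
  fixes Z :: "nat \<Rightarrow> ('d::finite) cmat"
  assumes herm: "\<And>k. hermitian (Z k)"
    and mono: "\<And>k x. Re (qform x (Z k) x) \<le> Re (qform x (Z (Suc k)) x)"
    and bounded: "\<And>k x. Re (qform x (Z k) x) \<le> (norm x)\<^sup>2"
  shows "\<exists>L. Z \<longlonglongrightarrow> L"
proof -
  define q where "q x k = qform x (Z k) x" for x k
  have q_conv: "\<exists>l. q x \<longlonglongrightarrow> l" for x
  proof -
    have "incseq (\<lambda>k. Re (q x k))"
      unfolding q_def by (rule incseq_SucI) (rule mono)
    then obtain l where "(\<lambda>k. Re (q x k)) \<longlonglongrightarrow> l"
      using bounded unfolding q_def by (metis incseq_convergent)
    then have "(\<lambda>k. of_real (Re (q x k))) \<longlonglongrightarrow> complex_of_real l"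
      by (rule tendsto_of_real)
    then show ?thesis
      unfolding q_def by (subst (asm) hermitian_qform_of_real[OF herm, symmetric]) blast
  qed
  have "\<exists>l. (\<lambda>k. Z k $ a $ b) \<longlonglongrightarrow> l" for a b
  proof -
    obtain l1 l2 l3 l4 where
      "q (axis a 1 + axis b 1) \<longlonglongrightarrow> l1" "q (axis a 1) \<longlonglongrightarrow> l2"
      "q (axis b 1) \<longlonglongrightarrow> l3" "q (axis a 1 + axis b \<i>) \<longlonglongrightarrow> l4"
      using q_conv by metis
    then have "(\<lambda>k. (q (axis a 1 + axis b 1) k - q (axis a 1) k - q (axis b 1) k
        - \<i> * (q (axis a 1 + axis b \<i>) k - q (axis a 1) k - q (axis b 1) k)) / 2)
        \<longlonglongrightarrow> (l1 - l2 - l3 - \<i> * (l4 - l2 - l3)) / 2"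
      by (intro tendsto_intros) simp_all
    moreover have "(\<lambda>k. (q (axis a 1 + axis b 1) k - q (axis a 1) k - q (axis b 1) k
        - \<i> * (q (axis a 1 + axis b \<i>) k - q (axis a 1) k - q (axis b 1) k)) / 2)
        = (\<lambda>k. Z k $ a $ b)"
      unfolding q_def polarization[symmetric] by simp
    ultimately show ?thesis by metis
  qed
  then have "Z \<longlonglongrightarrow> (\<chi> a b. lim (\<lambda>k. Z k $ a $ b))"
    by (intro vec_tendstoI) (simp add: convergent_LIMSEQ_iff[symmetric] convergent_def)
  then show ?thesis ..
qed

text \<open>For \<open>0 \<le> N \<le> 1\<close> the iterates \<open>Z\<^sub>k\<^sub>+\<^sub>1 = (N + Z\<^sub>k\<^sup>2)/2\<close> increase to the
  fixed point \<open>Z = 1 - \<surd>(1 - N)\<close>; they are polynomials in \<open>N\<close> with nonnegative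
  coefficients, which is what makes them comparable.\<close>

fun sqrt_iter :: "('d::finite) cmat \<Rightarrow> nat \<Rightarrow> 'd cmat" where
  "sqrt_iter N 0 = 0"
| "sqrt_iter N (Suc k) = (1/2) *\<^sub>R (N + sqrt_iter N k ** sqrt_iter N k)"

fun sqrt_iter_weight :: "nat \<Rightarrow> real" where
  "sqrt_iter_weight 0 = 0"
| "sqrt_iter_weight (Suc k) = (1 + sqrt_iter_weight k * sqrt_iter_weight k) / 2"

lemma sqrt_iter_weight_bounds: "0 \<le> sqrt_iter_weight k \<and> sqrt_iter_weight k \<le> 1"
  by (induction k) (auto simp: mult_le_one)

lemma nonneg_poly_sqrt_iter: "nonneg_poly N (sqrt_iter N k) (sqrt_iter_weight k)"
proof (induction k)
  case (Suc k)
  have "nonneg_poly N (N + sqrt_iter N k ** sqrt_iter N k) (1 + sqrt_iter_weight k * sqrt_iter_weight k)"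
    using nonneg_poly.power[of N 1] by (intro nonneg_poly.add nonneg_poly_mult Suc) simp
  then show ?case
    using nonneg_poly.scale[of N _ _ "1/2"] by simp
qed (simp add: nonneg_poly.zero)

lemma nonneg_poly_sqrt_iter_step: "\<exists>w. nonneg_poly N (sqrt_iter N (Suc k) - sqrt_iter N k) w"
proof (induction k)
  case 0
  have "nonneg_poly N ((1/2) *\<^sub>R matpow N 1) ((1/2) * 1)"
    by (intro nonneg_poly.scale nonneg_poly.power) auto
  then show ?case by auto
next
  case (Suc k)
  then obtain w where w: "nonneg_poly N (sqrt_iter N (Suc k) - sqrt_iter N k) w" by blast
  define A where "A = sqrt_iter N (Suc k)"
  define B where "B = sqrt_iter N k"
  have "A ** B = B ** A"
    unfolding A_def B_def by (rule nonneg_poly_commute[OF nonneg_poly_sqrt_iter nonneg_poly_sqrt_iter])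
  then have square_diff: "(A - B) ** (A + B) = A ** A - B ** B"
    by (simp add: matrix_add_ldistrib matrix_diff_rdistrib)
  have "sqrt_iter N (Suc (Suc k)) - sqrt_iter N (Suc k)
      = (1/2) *\<^sub>R (N + A ** A) - (1/2) *\<^sub>R (N + B ** B)"
    by (simp only: A_def B_def sqrt_iter.simps)
  also have "\<dots> = (1/2) *\<^sub>R ((A - B) ** (A + B))"
    unfolding square_diff by (metis add_diff_cancel_left scaleR_diff_right)
  finally have step: "sqrt_iter N (Suc (Suc k)) - sqrt_iter N (Suc k) = (1/2) *\<^sub>R ((A - B) ** (A + B))" .
  have "nonneg_poly N ((A - B) ** (A + B)) (w * (sqrt_iter_weight (Suc k) + sqrt_iter_weight k))"
    unfolding A_def B_def by (intro nonneg_poly_mult w nonneg_poly.add nonneg_poly_sqrt_iter)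
  then have "nonneg_poly N ((1/2) *\<^sub>R ((A - B) ** (A + B)))
      ((1/2) * (w * (sqrt_iter_weight (Suc k) + sqrt_iter_weight k)))"
    by (rule nonneg_poly.scale) simp
  then show ?case
    unfolding step by blast
qed

context
  fixes N :: "('d::finite) cmat"
  assumes psd_N: "psd N" and psd_1_N: "psd (mat 1 - N)"
begin

lemma hermitian_sqrt_iter: "hermitian (sqrt_iter N k)"
  by (rule nonneg_poly_hermitian[OF nonneg_poly_sqrt_iter psd_hermitian[OF psd_N]])

lemma qform_sqrt_iter_mono: "Re (qform x (sqrt_iter N k) x) \<le> Re (qform x (sqrt_iter N (Suc k)) x)"
proof -
  obtain w where "nonneg_poly N (sqrt_iter N (Suc k) - sqrt_iter N k) w"
    using nonneg_poly_sqrt_iter_step by blast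
  then have "psd (sqrt_iter N (Suc k) - sqrt_iter N k)"
    using nonneg_poly_psd_le[OF psd_N psd_1_N] by blast
  then show ?thesis
    unfolding psd_def qform_diff by auto
qed

lemma qform_sqrt_iter_le: "Re (qform x (sqrt_iter N k) x) \<le> (norm x)\<^sup>2"
  using nonneg_poly_psd_le[OF psd_N psd_1_N nonneg_poly_sqrt_iter, of k x]
    sqrt_iter_weight_bounds[of k]
  by (smt (verit) mult_left_le_one_le zero_le_power2)

lemma sqrt_iter_limit:
  obtains L where "sqrt_iter N \<longlonglongrightarrow> L" and "L = (1/2) *\<^sub>R (N + L ** L)"
    and "hermitian L" and "\<And>x. Re (qform x L x) \<le> (norm x)\<^sup>2"
proof -
  obtain L where L: "sqrt_iter N \<longlonglongrightarrow> L"
    using hermitian_incseq_bounded_convergent[of "sqrt_iter N", OF hermitian_sqrt_iter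
        qform_sqrt_iter_mono qform_sqrt_iter_le] by blast
  moreover have "L = (1/2) *\<^sub>R (N + L ** L)"
  proof (rule LIMSEQ_unique[OF LIMSEQ_Suc[OF L]])
    show "(\<lambda>k. sqrt_iter N (Suc k)) \<longlonglongrightarrow> (1/2) *\<^sub>R (N + L ** L)"
      unfolding sqrt_iter.simps by (intro tendsto_intros tendsto_matrix_mult L)
  qed
  moreover have "(\<lambda>k. adj (sqrt_iter N k)) = sqrt_iter N"
    using hermitian_sqrt_iter unfolding hermitian_def by simp
  then have "hermitian L"
    using LIMSEQ_unique[OF tendsto_adj[OF L]] L unfolding hermitian_def by metis
  moreover have "Re (qform x L x) \<le> (norm x)\<^sup>2" for x
  proof (rule LIMSEQ_le_const2)
    show "(\<lambda>k. Re (qform x (sqrt_iter N k) x)) \<longlonglongrightarrow> Re (qform x L x)"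
      by (intro tendsto_intros bounded_linear.tendsto[OF bounded_linear_qform] L)
  qed (use qform_sqrt_iter_le in auto)
  ultimately show ?thesis
    by (rule that)
qed

lemma psd_sqrt_exists_contraction:
  "\<exists>S. psd S \<and> S ** S = mat 1 - N \<and> (\<forall>R. R ** N = N ** R \<longrightarrow> R ** S = S ** R)"
proof -
  obtain L where L: "sqrt_iter N \<longlonglongrightarrow> L" and fixpoint: "L = (1/2) *\<^sub>R (N + L ** L)"
    and "hermitian L" and "\<And>x. Re (qform x L x) \<le> (norm x)\<^sup>2"
    using sqrt_iter_limit by metis
  then have "psd (mat 1 - L)"
    unfolding psd_def qform_diff qform_mat_1 hermitian_iff_qform_real by simp
  moreover have "2 *\<^sub>R L = N + L ** L"
    by (subst (1) fixpoint) (simp del: scaleR_conv_of_real)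
  then have "(mat 1 - L) ** (mat 1 - L) = mat 1 - N"
    by (simp add: matrix_diff_ldistrib matrix_diff_rdistrib scaleR_2 algebra_simps
        del: scaleR_conv_of_real)
  moreover have "R ** (mat 1 - L) = (mat 1 - L) ** R" if RN: "R ** N = N ** R" for R
  proof -
    have "(\<lambda>k. R ** sqrt_iter N k) = (\<lambda>k. sqrt_iter N k ** R)"
      using nonneg_poly_commute_if[OF nonneg_poly_sqrt_iter RN] by auto
    then have "R ** L = L ** R"
      using LIMSEQ_unique tendsto_matrix_mult[OF tendsto_const L, of R]
        tendsto_matrix_mult[OF L tendsto_const, of R] by metis
    then show ?thesis
      by (simp add: matrix_diff_ldistrib matrix_diff_rdistrib)
  qed
  ultimately show ?thesis by blast
qed

end

lemma psd_add_eq_0_imp: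
  assumes "psd A" and "psd B" and "A + B = 0"
  shows "A = 0"
proof (rule qform_diag_eq_0_imp)
  fix x
  have "Re (qform x A x) + Re (qform x B x) = 0"
    using arg_cong[OF assms(3), of "\<lambda>M. Re (qform x M x)"] by (simp add: qform_add)
  moreover have "Im (qform x A x) = 0" "0 \<le> Re (qform x A x)" "0 \<le> Re (qform x B x)"
    using assms(1,2) unfolding psd_def by auto
  ultimately show "qform x A x = 0"
    by (simp add: complex_eq_iff)
qed

lemma psd_commuting_square_roots_eq:
  assumes psd_R: "psd R" and psd_S: "psd S"
    and squares: "R ** R = S ** S" and commute: "R ** S = S ** R"
  shows "R = S"
proof -
  define D where "D = R - S"
  have herm_D: "hermitian D"
    unfolding D_def using psd_R psd_S by (simp add: psd_hermitian hermitian_diff)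
  have "D ** (R + S) = 0"
    unfolding D_def by (simp add: matrix_add_ldistrib matrix_diff_rdistrib squares commute)
  then have "D ** (R + S) ** D = 0"
    by simp
  then have sum: "D ** R ** D + D ** S ** D = 0"
    by (simp add: matrix_add_ldistrib matrix_add_rdistrib)
  have psd_DRD: "psd (D ** R ** D)" and psd_DSD: "psd (D ** S ** D)"
    using psd_hermitian_congruence[OF _ herm_D] psd_R psd_S by auto
  have "D ** R ** D = 0"
    by (rule psd_add_eq_0_imp[OF psd_DRD psd_DSD sum])
  moreover from this have "D ** S ** D = 0"
    using sum by simp
  moreover have "D ** (R - S) ** D = D ** R ** D - D ** S ** D"
    by (simp add: matrix_diff_ldistrib matrix_diff_rdistrib)
  ultimately have "D ** D ** D = 0"
    by (simp add: D_def[symmetric])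
  then have "(D ** D) ** (D ** D) = 0"
    by (simp add: matrix_mul_assoc)
  moreover have "hermitian (D ** D)"
    using herm_D by (simp add: hermitian_def adj_mult)
  ultimately have "D ** D = 0"
    using hermitian_square_eq_0_imp by blast
  then have "D = 0"
    by (rule hermitian_square_eq_0_imp[OF herm_D])
  then show ?thesis
    unfolding D_def by simp
qed

text \<open>Rescale \<open>M\<close> so that \<open>N = 1 - M/c\<close> lies between \<open>0\<close> and \<open>1\<close>.\<close>

lemma psd_sqrt_exists_commuting:
  fixes M :: "('d::finite) cmat"
  assumes psd_M: "psd M"
  shows "\<exists>S. psd S \<and> S ** S = M \<and> (\<forall>R. R ** M = M ** R \<longrightarrow> R ** S = S ** R)"
proof -
  define c where "c = real (CARD('d) * CARD('d)) * norm M + 1"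
  have c_pos: "c > 0"
    unfolding c_def by (simp add: add_nonneg_pos)
  define N where "N = mat 1 - (1/c) *\<^sub>R M"
  have "psd N"
    unfolding psd_def
  proof
    fix x
    have "Re (qform x M x) \<le> real (CARD('d) * CARD('d)) * norm x * norm M * norm x"
      using order_trans[OF complex_Re_le_cmod norm_qform_le] by simp
    also have "\<dots> \<le> c * (norm x)\<^sup>2"
      unfolding c_def by (simp add: power2_eq_square algebra_simps)
    finally have "Re (qform x M x) / c \<le> (norm x)\<^sup>2"
      using c_pos by (simp add: divide_le_eq mult.commute)
    then show "Im (qform x N x) = 0 \<and> 0 \<le> Re (qform x N x)"
      using psd_M unfolding N_def psd_def qform_diff qform_mat_1 qform_scaleR by auto
  qed
  moreover have "psd (mat 1 - N)"
    unfolding N_def using psd_scaleR[OF psd_M, of "1/c"] c_pos by simp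
  ultimately obtain S where psd_S: "psd S" and square_S: "S ** S = mat 1 - N"
    and commute_S: "\<And>R. R ** N = N ** R \<Longrightarrow> R ** S = S ** R"
    using psd_sqrt_exists_contraction by blast
  have "psd (sqrt c *\<^sub>R S)"
    by (rule psd_scaleR[OF psd_S]) (simp add: c_pos less_imp_le)
  moreover have "(sqrt c *\<^sub>R S) ** (sqrt c *\<^sub>R S) = M"
    using c_pos square_S unfolding N_def
    by (simp add: matrix_mult_scaleR_left matrix_mult_scaleR_right del: scaleR_conv_of_real)
  moreover have "R ** (sqrt c *\<^sub>R S) = (sqrt c *\<^sub>R S) ** R" if "R ** M = M ** R" for R
  proof -
    have "R ** N = N ** R"
      unfolding N_def using that
      by (simp add: matrix_diff_ldistrib matrix_diff_rdistrib matrix_mult_scaleR_left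
          matrix_mult_scaleR_right del: scaleR_conv_of_real)
    then show ?thesis
      using commute_S by (simp add: matrix_mult_scaleR_left matrix_mult_scaleR_right
          del: scaleR_conv_of_real)
  qed
  ultimately show ?thesis by blast
qed

lemma ex1_psd_square_root:
  assumes "psd M"
  shows "\<exists>!R. psd R \<and> R ** R = M"
proof -
  obtain S where S: "psd S" "S ** S = M" and commute: "\<And>R. R ** M = M ** R \<Longrightarrow> R ** S = S ** R"
    using psd_sqrt_exists_commuting[OF assms] by blast
  have "R = S" if "psd R" "R ** R = M" for R
  proof (rule psd_commuting_square_roots_eq[OF that(1) S(1)])
    show "R ** R = S ** S" using that S by simp
    show "R ** S = S ** R"
      using commute[of R] that(2) by (metis matrix_mul_assoc)
  qed
  then show ?thesis using S by blast
qed

lemma psd_sqrt: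
  assumes "psd M"
  shows "psd (psd_sqrt M)" and "psd_sqrt M ** psd_sqrt M = M"
  using theI'[OF ex1_psd_square_root[OF assms]] unfolding psd_sqrt_def by auto

lemma invertible_psd_sqrt:
  assumes "pos_def M"
  shows "invertible (psd_sqrt M)"
  unfolding invertible_left_inverse matrix_left_invertible_ker
proof (intro allI impI)
  fix x
  assume root_x: "psd_sqrt M *v x = 0"
  have "M *v x = psd_sqrt M *v (psd_sqrt M *v x)"
    using psd_sqrt(2)[OF pos_def_imp_psd[OF assms]] by (simp add: matrix_vector_mul_assoc)
  then have "qform x M x = 0"
    using root_x by (simp add: qform_def)
  then show "x = 0"
    using assms unfolding pos_def_def by (metis less_irrefl zero_complex.sel(1))
qed

lemma matrix_inv_mult:
  assumes "invertible (A :: 'a::semiring_1^'n^'m)"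
  shows "A ** matrix_inv A = mat 1" and "matrix_inv A ** A = mat 1"
  using someI_ex[OF assms[unfolded invertible_def]] unfolding matrix_inv_def by auto

lemma inv_sqrt_pos_def:
  assumes "pos_def M"
  shows "hermitian (inv_sqrt M)" and "inv_sqrt M ** M ** inv_sqrt M = mat 1"
proof -
  define R where "R = psd_sqrt M"
  define S where "S = inv_sqrt M"
  have "psd R" and square: "R ** R = M"
    unfolding R_def using psd_sqrt pos_def_imp_psd[OF assms] by auto
  have RS: "R ** S = mat 1" and SR: "S ** R = mat 1"
    unfolding inv_sqrt_def R_def S_def using matrix_inv_mult invertible_psd_sqrt[OF assms] by auto
  have "adj S ** R = mat 1"
    using arg_cong[OF RS, of adj] psd_hermitian[OF \<open>psd R\<close>] by (simp add: adj_mult hermitian_def)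
  then have "adj S = S"
    by (metis SR matrix_mul_assoc matrix_mul_lid matrix_mul_rid RS)
  then show "hermitian (inv_sqrt M)"
    unfolding S_def hermitian_def .
  have "S ** M ** S = (S ** R) ** (R ** S)"
    unfolding square[symmetric] by (simp add: matrix_mul_assoc)
  then show "inv_sqrt M ** M ** inv_sqrt M = mat 1"
    unfolding S_def[symmetric] RS SR by simp
qed

section \<open>Complex-linear maps and block matrices\<close>

lemma clinear_add: "clinear_map f \<Longrightarrow> f (A + B) = f A + f B"
  unfolding clinear_map_def by blast

lemma clinear_cscale: "clinear_map f \<Longrightarrow> f (cscale c A) = cscale c (f A)"
  unfolding clinear_map_def by blast

lemma clinear_scaleR: "clinear_map f \<Longrightarrow> f (c *\<^sub>R A) = c *\<^sub>R f A"
  by (simp only: scaleR_eq_cscale clinear_cscale)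

lemma clinear_0: "clinear_map f \<Longrightarrow> f 0 = 0"
  using clinear_add[of f 0 0] by simp

lemma clinear_sum: "clinear_map f \<Longrightarrow> f (\<Sum>i\<in>I. A i) = (\<Sum>i\<in>I. f (A i))"
  by (induction I rule: infinite_finite_induct) (auto simp: clinear_0 clinear_add)

definition block_qform :: "nat \<Rightarrow> (nat \<Rightarrow> complex^'d) \<Rightarrow> (nat \<Rightarrow> nat \<Rightarrow> ('d::finite) cmat) \<Rightarrow> complex"
  where "block_qform n y X = (\<Sum>i<n. \<Sum>j<n. qform (y i) (X i j) (y j))"

definition block_sqnorm :: "nat \<Rightarrow> (nat \<Rightarrow> complex^('d::finite)) \<Rightarrow> real"
  where "block_sqnorm n y = (\<Sum>i<n. (norm (y i))\<^sup>2)"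

definition block_id :: "nat \<Rightarrow> nat \<Rightarrow> ('d::finite) cmat"
  where "block_id i j = (if i = j then mat 1 else 0)"

text \<open>\<open>X\<close> is accretive when \<open>X + X\<^sup>*\<close> is positive semidefinite.\<close>

definition block_accretive :: "nat \<Rightarrow> (nat \<Rightarrow> nat \<Rightarrow> ('d::finite) cmat) \<Rightarrow> bool"
  where "block_accretive n X \<longleftrightarrow> (\<forall>y. 0 \<le> Re (block_qform n y X))"

lemma block_psd_iff: "block_psd n X \<longleftrightarrow> (\<forall>y. Im (block_qform n y X) = 0 \<and> 0 \<le> Re (block_qform n y X))"
  unfolding block_psd_def block_qform_def by simp

lemma block_sqnorm_nonneg: "0 \<le> block_sqnorm n y"
  unfolding block_sqnorm_def by (simp add: sum_nonneg)

lemma block_qform_add: "block_qform n y (\<lambda>i j. A i j + B i j) = block_qform n y A + block_qform n y B"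
  unfolding block_qform_def by (simp add: qform_add sum.distrib)

lemma block_qform_diff: "block_qform n y (\<lambda>i j. A i j - B i j) = block_qform n y A - block_qform n y B"
  unfolding block_qform_def by (simp add: qform_diff sum_subtractf)

lemma block_qform_cscale: "block_qform n y (\<lambda>i j. cscale c (A i j)) = c * block_qform n y A"
  unfolding block_qform_def by (simp add: qform_cscale sum_distrib_left)

lemma block_qform_scaleR: "block_qform n y (\<lambda>i j. c *\<^sub>R A i j) = of_real c * block_qform n y A"
  unfolding block_qform_def by (simp add: qform_scaleR sum_distrib_left del: scaleR_conv_of_real)

lemma block_qform_adj: "block_qform n y (\<lambda>i j. adj (A j i)) = cnj (block_qform n y A)"
  unfolding block_qform_def qform_adj cnj_sum by (rule sum.swap)

lemma block_qform_block_id: "block_qform n y block_id = of_real (block_sqnorm n y)"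
proof -
  have "block_qform n y block_id = (\<Sum>i<n. qform (y i) (mat 1) (y i))"
    unfolding block_qform_def block_id_def by (simp add: if_distrib[of "\<lambda>M. qform _ M _"] cong: if_cong)
  then show ?thesis
    unfolding block_sqnorm_def by (simp add: qform_mat_1)
qed

lemma block_psd_block_id: "block_psd n block_id"
  unfolding block_psd_iff block_qform_block_id by (simp add: block_sqnorm_nonneg)

lemma norm_block_qform_le:
  fixes X :: "nat \<Rightarrow> nat \<Rightarrow> ('d::finite) cmat"
  assumes "\<And>i j. i < n \<Longrightarrow> j < n \<Longrightarrow> norm (X i j) \<le> m" and "0 \<le> m"
  shows "cmod (block_qform n y X) \<le> of_nat (CARD('d) * CARD('d)) * of_nat n * m * block_sqnorm n y"
proof -
  let ?C = "of_nat (CARD('d) * CARD('d)) :: real"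
  have "cmod (block_qform n y X) \<le> (\<Sum>i<n. \<Sum>j<n. cmod (qform (y i) (X i j) (y j)))"
    unfolding block_qform_def by (rule order_trans[OF norm_sum sum_mono]) (rule norm_sum)
  also have "\<dots> \<le> (\<Sum>i<n. \<Sum>j<n. ?C * m * ((norm (y i))\<^sup>2 + (norm (y j))\<^sup>2) / 2)"
  proof (intro sum_mono)
    fix i j assume "i \<in> {..<n}" "j \<in> {..<n}"
    then have "norm (X i j) \<le> m"
      using assms(1) by simp
    have "cmod (qform (y i) (X i j) (y j)) \<le> ?C * norm (y i) * norm (X i j) * norm (y j)"
      by (rule norm_qform_le)
    also have "\<dots> \<le> ?C * norm (y i) * m * norm (y j)"
      using \<open>norm (X i j) \<le> m\<close> by (intro mult_right_mono mult_left_mono) auto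
    also have "\<dots> = ?C * m * (norm (y i) * norm (y j))"
      by simp
    also have "\<dots> \<le> ?C * m * (((norm (y i))\<^sup>2 + (norm (y j))\<^sup>2) / 2)"
      using assms(2) sum_squares_bound[of "norm (y i)" "norm (y j)"]
      by (intro mult_left_mono) (auto simp: field_simps)
    finally show "cmod (qform (y i) (X i j) (y j)) \<le> ?C * m * ((norm (y i))\<^sup>2 + (norm (y j))\<^sup>2) / 2"
      by simp
  qed
  also have "\<dots> = ?C * m / 2 * (\<Sum>i<n. \<Sum>j<n. (norm (y i))\<^sup>2 + (norm (y j))\<^sup>2)"
    by (simp add: sum_distrib_left sum_divide_distrib)
  also have "(\<Sum>i<n. \<Sum>j<n. (norm (y i))\<^sup>2 + (norm (y j))\<^sup>2) = 2 * of_nat n * block_sqnorm n y"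
    unfolding block_sqnorm_def sum.distrib
    by (simp add: sum.swap[of "\<lambda>i j. (norm (y j))\<^sup>2"] sum_distrib_left mult.assoc)
  finally show ?thesis by (simp add: ac_simps)
qed

lemma completely_positive_real_block_qform:
  fixes \<Phi> :: "('d::finite) cmat \<Rightarrow> 'd cmat"
  assumes lin: "clinear_map \<Phi>" and cp: "completely_positive \<Phi>"
    and real: "\<And>y. Im (block_qform n y L) = 0"
  shows "Im (block_qform n y (\<lambda>i j. \<Phi> (L i j))) = 0"
proof -
  define m where "m = (\<Sum>i<n. \<Sum>j<n. norm (L i j))"
  have "norm (L i j) \<le> m" if "i < n" "j < n" for i j
  proof -
    have "norm (L i j) \<le> (\<Sum>j<n. norm (L i j))"
      using that by (intro member_le_sum) auto
    also have "\<dots> \<le> m"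
      unfolding m_def using that by (intro member_le_sum[of i]) (auto simp: sum_nonneg)
    finally show ?thesis .
  qed
  moreover have "0 \<le> m"
    unfolding m_def by (simp add: sum_nonneg)
  moreover define c where "c = of_nat (CARD('d) * CARD('d)) * of_nat n * m"
  ultimately have bound: "cmod (block_qform n y' L) \<le> c * block_sqnorm n y'" for y'
    using norm_block_qform_le by blast
  \<comment> \<open>Shifting by a multiple of the identity makes \<open>L\<close> positive.\<close>
  have "block_psd n (\<lambda>i j. L i j + c *\<^sub>R block_id i j)"
    unfolding block_psd_iff
  proof
    fix y'
    have "- (c * block_sqnorm n y') \<le> Re (block_qform n y' L)"
      using bound[of y'] abs_Re_le_cmod[of "block_qform n y' L"] by linarith
    then show "Im (block_qform n y' (\<lambda>i j. L i j + c *\<^sub>R block_id i j)) = 0 \<and>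
        0 \<le> Re (block_qform n y' (\<lambda>i j. L i j + c *\<^sub>R block_id i j))"
      unfolding block_qform_add block_qform_scaleR block_qform_block_id using real by simp
  qed
  then have "Im (block_qform n y (\<lambda>i j. \<Phi> (L i j + c *\<^sub>R block_id i j))) = 0"
    using cp unfolding completely_positive_def block_psd_iff by blast
  moreover have "Im (block_qform n y (\<lambda>i j. \<Phi> (block_id i j))) = 0"
    using cp block_psd_block_id unfolding completely_positive_def block_psd_iff by blast
  ultimately show ?thesis
    unfolding clinear_add[OF lin] clinear_scaleR[OF lin] block_qform_add block_qform_scaleR
    by simp
qed

text \<open>Split \<open>Z = H + \<i> L\<close> into its hermitian parts; \<open>H\<close> is positive and \<open>\<Phi>\<close> keeps
  the form of \<open>L\<close> real.\<close>

lemma completely_positive_accretive: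
  fixes \<Phi> :: "('d::finite) cmat \<Rightarrow> 'd cmat"
  assumes lin: "clinear_map \<Phi>" and cp: "completely_positive \<Phi>"
    and accretive: "block_accretive n Z"
  shows "block_accretive n (\<lambda>i j. \<Phi> (Z i j))"
  unfolding block_accretive_def
proof
  fix y
  define H where "H i j = (1/2) *\<^sub>R (Z i j + adj (Z j i))" for i j
  define L where "L i j = cscale (- \<i>) (Z i j - H i j)" for i j
  have form_H: "block_qform n y' H = of_real (Re (block_qform n y' Z))" for y'
    unfolding H_def block_qform_scaleR block_qform_add block_qform_adj
    by (simp add: complex_add_cnj del: scaleR_conv_of_real)
  have "Im (block_qform n y' L) = 0" for y'
    unfolding L_def block_qform_cscale block_qform_diff form_H by simp
  then have "Im (block_qform n y (\<lambda>i j. \<Phi> (L i j))) = 0"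
    by (rule completely_positive_real_block_qform[OF lin cp])
  moreover have "block_psd n H"
    using accretive unfolding block_psd_iff form_H block_accretive_def by simp
  then have "0 \<le> Re (block_qform n y (\<lambda>i j. \<Phi> (H i j)))"
    using cp unfolding completely_positive_def block_psd_iff by blast
  moreover have "Z i j = H i j + cscale \<i> (L i j)" for i j
    unfolding L_def by (simp add: cscale_def vec_eq_iff)
  then have "block_qform n y (\<lambda>i j. \<Phi> (Z i j))
      = block_qform n y (\<lambda>i j. \<Phi> (H i j)) + \<i> * block_qform n y (\<lambda>i j. \<Phi> (L i j))"
    by (simp add: clinear_add[OF lin] clinear_cscale[OF lin] block_qform_add block_qform_cscale)
  ultimately show "0 \<le> Re (block_qform n y (\<lambda>i j. \<Phi> (Z i j)))"
    by simp
qed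

lemma completely_positive_if_preserves_accretive:
  fixes \<Phi> :: "('d::finite) cmat \<Rightarrow> 'd cmat"
  assumes lin: "clinear_map \<Phi>"
    and preserves: "\<And>n X. block_accretive n X \<Longrightarrow> block_accretive n (\<lambda>i j. \<Phi> (X i j))"
  shows "completely_positive \<Phi>"
  unfolding completely_positive_def block_psd_iff
proof (intro allI impI conjI)
  fix n and X :: "nat \<Rightarrow> nat \<Rightarrow> 'd cmat" and y
  assume psd_X: "\<forall>y. Im (block_qform n y X) = 0 \<and> 0 \<le> Re (block_qform n y X)"
  then show "0 \<le> Re (block_qform n y (\<lambda>i j. \<Phi> (X i j)))"
    using preserves unfolding block_accretive_def by blast
  \<comment> \<open>The forms of \<open>\<plusminus>\<i> X\<close> have zero real part, so those blocks are accretive too.\<close>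
  have "0 \<le> Re (c * block_qform n y (\<lambda>i j. \<Phi> (X i j)))" if "c = \<i> \<or> c = - \<i>" for c
  proof -
    have "block_accretive n (\<lambda>i j. cscale c (X i j))"
      unfolding block_accretive_def block_qform_cscale using psd_X that by auto
    then have "block_accretive n (\<lambda>i j. \<Phi> (cscale c (X i j)))"
      by (rule preserves)
    then show ?thesis
      unfolding block_accretive_def clinear_cscale[OF lin] block_qform_cscale by blast
  qed
  from this[of \<i>] this[of "- \<i>"] show "Im (block_qform n y (\<lambda>i j. \<Phi> (X i j))) = 0"
    by simp
qed

lemma completely_positive_congruence:
  fixes \<Phi> :: "('d::finite) cmat \<Rightarrow> 'd cmat"
  assumes "completely_positive \<Phi>"
  shows "completely_positive (\<lambda>a. adj S ** \<Phi> a ** S)"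
  unfolding completely_positive_def
proof (intro allI impI)
  fix n and X :: "nat \<Rightarrow> nat \<Rightarrow> 'd cmat"
  assume "block_psd n X"
  then have "block_psd n (\<lambda>i j. \<Phi> (X i j))"
    using assms unfolding completely_positive_def by blast
  moreover have "block_qform n y (\<lambda>i j. adj S ** \<Phi> (X i j) ** S)
      = block_qform n (\<lambda>i. S *v y i) (\<lambda>i j. \<Phi> (X i j))" for y
    unfolding block_qform_def qform_sandwich ..
  ultimately show "block_psd n (\<lambda>i j. adj S ** \<Phi> (X i j) ** S)"
    unfolding block_psd_iff by simp
qed

definition matrix_unit :: "'d \<Rightarrow> 'd \<Rightarrow> ('d::finite) cmat" where
  "matrix_unit k l = (\<chi> i j. if i = k \<and> j = l then 1 else 0)"

lemma matrix_unit_decomposition: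
  "(a::('d::finite) cmat) = (\<Sum>k\<in>UNIV. \<Sum>l\<in>UNIV. cscale (a$k$l) (matrix_unit k l))"
proof -
  have "(\<Sum>k\<in>UNIV. \<Sum>l\<in>UNIV. cscale (a$k$l) (matrix_unit k l)) $ i $ j = a $ i $ j" for i j
  proof -
    have "(\<Sum>k\<in>UNIV. \<Sum>l\<in>UNIV. cscale (a$k$l) (matrix_unit k l)) $ i $ j
        = (\<Sum>k\<in>UNIV. \<Sum>l\<in>UNIV. if i = k \<and> j = l then a$k$l else 0)"
      by (simp add: sum_component cscale_def matrix_unit_def if_distrib cong: if_cong)
    also have "\<dots> = (\<Sum>k\<in>UNIV. if i = k then a$k$j else 0)"
      by (intro sum.cong refl, case_tac "i = x") simp_all
    finally show ?thesis by simp
  qed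
  then show ?thesis
    by (simp add: vec_eq_iff)
qed

lemma clinear_matrix_unit_decomposition:
  "clinear_map f \<Longrightarrow> f a = (\<Sum>k\<in>UNIV. \<Sum>l\<in>UNIV. cscale (a$k$l) (f (matrix_unit k l)))"
  by (subst matrix_unit_decomposition[of a]) (simp add: clinear_sum clinear_cscale)

lemma continuous_on_cscale:
  assumes "continuous_on S g" and "continuous_on S H"
  shows "continuous_on S (\<lambda>s. cscale (g s) (H s :: ('d::finite) cmat))"
  unfolding cscale_def
  by (intro continuous_on_vec_lambda continuous_on_mult assms continuous_on_component)

lemma continuous_on_clinear_family:
  fixes B :: "real \<Rightarrow> ('d::finite) cmat \<Rightarrow> 'd cmat"
  assumes lin: "\<And>s. s \<in> S \<Longrightarrow> clinear_map (B s)"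
    and B: "\<And>a. continuous_on S (\<lambda>s. B s a)" and f: "continuous_on S f"
  shows "continuous_on S (\<lambda>s. B s (f s))"
proof (rule continuous_on_eq)
  show "continuous_on S (\<lambda>s. \<Sum>k\<in>UNIV. \<Sum>l\<in>UNIV. cscale (f s $ k $ l) (B s (matrix_unit k l)))"
    by (intro continuous_on_sum continuous_on_cscale continuous_on_component f B)
  show "(\<Sum>k\<in>UNIV. \<Sum>l\<in>UNIV. cscale (f s $ k $ l) (B s (matrix_unit k l))) = B s (f s)"
    if "s \<in> S" for s
    by (rule clinear_matrix_unit_decomposition[OF lin[OF that], symmetric])
qed

lemma continuous_on_block_qform:
  assumes "\<And>i j. i < n \<Longrightarrow> j < n \<Longrightarrow> continuous_on S (F i j)"
  shows "continuous_on S (\<lambda>s. block_qform n y (\<lambda>i j. F i j s))"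
proof -
  have "continuous_on S (\<lambda>s. qform (y i) (F i j s) (y j))" if "i < n" "j < n" for i j
    by (rule continuous_on_compose2[OF linear_continuous_on[OF bounded_linear_qform] assms[OF that]])
       (rule subset_UNIV)
  then show ?thesis
    unfolding block_qform_def by (intro continuous_on_sum) auto
qed

lemma block_qform_integral:
  assumes "\<And>i j. i < n \<Longrightarrow> j < n \<Longrightarrow> F i j integrable_on S"
  shows "(\<lambda>s. block_qform n y (\<lambda>i j. F i j s)) integrable_on S"
    and "block_qform n y (\<lambda>i j. integral S (F i j)) = integral S (\<lambda>s. block_qform n y (\<lambda>i j. F i j s))"
proof -
  have int: "(\<lambda>s. qform (y i) (F i j s) (y j)) integrable_on S" if "i \<in> {..<n}" "j \<in> {..<n}" for i j
    using integrable_linear[OF assms bounded_linear_qform] that by (simp add: o_def)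
  show "(\<lambda>s. block_qform n y (\<lambda>i j. F i j s)) integrable_on S"
    unfolding block_qform_def by (intro integrable_sum) (use int in auto)
  have "block_qform n y (\<lambda>i j. integral S (F i j))
      = (\<Sum>i<n. \<Sum>j<n. integral S (\<lambda>s. qform (y i) (F i j s) (y j)))"
    unfolding block_qform_def
    by (intro sum.cong refl) (use integral_linear[OF assms bounded_linear_qform] in \<open>simp add: o_def\<close>)
  also have "\<dots> = integral S (\<lambda>s. block_qform n y (\<lambda>i j. F i j s))"
    unfolding block_qform_def
    by (simp add: integral_sum int integrable_sum del: lessThan_iff)
  finally show "block_qform n y (\<lambda>i j. integral S (F i j)) = integral S (\<lambda>s. block_qform n y (\<lambda>i j. F i j s))" .
qed

lemma block_qform_integral_lower_bound:
  assumes "0 \<le> \<tau>" and cont: "\<And>i j. continuous_on {0..\<tau>} (F i j)"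
    and lower: "\<And>s. s \<in> {0..\<tau>} \<Longrightarrow> m \<le> Re (block_qform n y (\<lambda>i j. F i j s))"
  shows "\<tau> * m \<le> Re (block_qform n y (\<lambda>i j. integral {0..\<tau>} (F i j)))"
proof -
  have int: "F i j integrable_on {0..\<tau>}" for i j
    by (rule integrable_continuous_interval[OF cont])
  note form = block_qform_integral[of n F "{0..\<tau>}" y, OF int]
  have "\<tau> * m = integral {0..\<tau>} (\<lambda>s. m)"
    using assms(1) by simp
  also have "\<dots> \<le> integral {0..\<tau>} (\<lambda>s. Re (block_qform n y (\<lambda>i j. F i j s)))"
    using lower integrable_linear[OF form(1) bounded_linear_Re] by (intro integral_le) (auto simp: o_def)
  also have "\<dots> = Re (block_qform n y (\<lambda>i j. integral {0..\<tau>} (F i j)))"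
    using integral_linear[OF form(1) bounded_linear_Re] unfolding form(2) by (simp add: o_def)
  finally show ?thesis .
qed

lemma real_interval_induction:
  fixes T :: real
  assumes "0 \<le> T" and "P 0"
    and left_closed: "\<And>\<tau>. 0 < \<tau> \<Longrightarrow> \<tau> \<le> T \<Longrightarrow> \<forall>s\<in>{0..<\<tau>}. P s \<Longrightarrow> P \<tau>"
    and right_step: "\<And>\<tau>. 0 \<le> \<tau> \<Longrightarrow> \<tau> < T \<Longrightarrow> \<forall>s\<in>{0..\<tau>}. P s \<Longrightarrow> \<exists>d>0. \<forall>s\<in>{\<tau><..<\<tau>+d}. P s"
  shows "\<forall>s\<in>{0..T}. P s"
proof -
  define S where "S = {u \<in> {0..T}. \<forall>s\<in>{0..u}. P s}"
  define \<tau> where "\<tau> = Sup S"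
  have "0 \<in> S"
    unfolding S_def using assms(1,2) by auto
  moreover have bdd: "bdd_above S"
    unfolding S_def by (auto intro: bdd_aboveI[of _ T])
  ultimately have "0 \<le> \<tau>"
    unfolding \<tau>_def by (rule cSup_upper)
  have "\<tau> \<le> T"
    unfolding \<tau>_def using \<open>0 \<in> S\<close> by (intro cSup_least) (auto simp: S_def)
  have below: "P s" if "0 \<le> s" "s < \<tau>" for s
    using less_cSupD[of S s] \<open>0 \<in> S\<close> that unfolding \<tau>_def S_def by force
  have up_to: "\<forall>s\<in>{0..\<tau>}. P s"
  proof (cases "\<tau> = 0")
    case False
    then have "P \<tau>"
      using left_closed \<open>0 \<le> \<tau>\<close> \<open>\<tau> \<le> T\<close> below by auto
    then show ?thesis using below by force
  qed (use assms(2) in auto)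
  have "\<tau> = T"
  proof (rule ccontr)
    assume "\<tau> \<noteq> T"
    with \<open>\<tau> \<le> T\<close> have "\<tau> < T" by simp
    then obtain d where "d > 0" and right: "\<forall>s\<in>{\<tau><..<\<tau>+d}. P s"
      using right_step \<open>0 \<le> \<tau>\<close> up_to by blast
    define u where "u = min (\<tau> + d/2) T"
    have "u \<in> S"
      unfolding S_def u_def using \<open>0 \<le> \<tau>\<close> \<open>\<tau> < T\<close> \<open>d > 0\<close> up_to right
      by (auto simp: not_le)
    then have "u \<le> \<tau>"
      unfolding \<tau>_def using bdd by (rule cSup_upper)
    then show False
      unfolding u_def using \<open>d > 0\<close> \<open>\<tau> < T\<close> by auto
  qed
  then show ?thesis using up_to by simp
qed

lemma has_vector_derivative_right_remainder:
  fixes Y :: "real \<Rightarrow> nat \<Rightarrow> nat \<Rightarrow> 'a::real_normed_vector"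
  assumes deriv: "\<And>i j. ((\<lambda>\<sigma>. Y \<sigma> i j) has_vector_derivative D i j) (at \<tau> within {\<tau>..})"
    and "0 < \<delta>"
  obtains d where "0 < d" and "\<And>\<sigma> i j. \<sigma> \<in> {\<tau><..<\<tau>+d} \<Longrightarrow> i < n \<Longrightarrow> j < n \<Longrightarrow>
    norm (Y \<sigma> i j - Y \<tau> i j - (\<sigma> - \<tau>) *\<^sub>R D i j) \<le> \<delta> * (\<sigma> - \<tau>)"
proof -
  have "\<forall>\<^sub>F \<sigma> in at \<tau> within {\<tau>..}.
      norm (Y \<sigma> i j - Y \<tau> i j - (\<sigma> - \<tau>) *\<^sub>R D i j) \<le> \<delta> * norm (\<sigma> - \<tau>)" for i j
  proof -
    obtain d where "d > 0" "\<forall>\<sigma>\<in>{\<tau>..}. norm (\<sigma> - \<tau>) < d \<longrightarrow>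
        norm (Y \<sigma> i j - Y \<tau> i j - (\<sigma> - \<tau>) *\<^sub>R D i j) \<le> \<delta> * norm (\<sigma> - \<tau>)"
      using deriv[of i j] \<open>0 < \<delta>\<close> unfolding has_vector_derivative_def has_derivative_within_alt
      by blast
    then show ?thesis
      unfolding eventually_at by (auto simp: dist_norm)
  qed
  then have "\<forall>\<^sub>F \<sigma> in at \<tau> within {\<tau>..}. \<forall>i\<in>{..<n}. \<forall>j\<in>{..<n}.
      norm (Y \<sigma> i j - Y \<tau> i j - (\<sigma> - \<tau>) *\<^sub>R D i j) \<le> \<delta> * norm (\<sigma> - \<tau>)"
    by (intro eventually_ball_finite ballI) auto
  then show ?thesis
    using that unfolding eventually_at by (auto simp: dist_norm)
qed

text \<open>The first-order gain \<open>h \<epsilon> |y|\<^sup>2\<close> beats the \<open>o(h)\<close> remainder.\<close>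

lemma block_accretive_right_of:
  fixes Y :: "real \<Rightarrow> nat \<Rightarrow> nat \<Rightarrow> ('d::finite) cmat"
  assumes deriv: "\<And>i j. ((\<lambda>\<sigma>. Y \<sigma> i j) has_vector_derivative D i j) (at \<tau> within {\<tau>..})"
    and accretive: "block_accretive n (Y \<tau>)"
    and coercive: "\<And>y. \<epsilon> * block_sqnorm n y \<le> Re (block_qform n y D)" and "0 < \<epsilon>"
  shows "\<exists>d>0. \<forall>\<sigma>\<in>{\<tau><..<\<tau>+d}. block_accretive n (Y \<sigma>)"
proof -
  define K :: real where "K = of_nat (CARD('d) * CARD('d)) * of_nat n"
  define \<delta> where "\<delta> = \<epsilon> / (K + 1)"
  have "0 \<le> K"
    unfolding K_def by simp
  then have "0 < \<delta>" and K\<delta>: "K * \<delta> \<le> \<epsilon>"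
    unfolding \<delta>_def using \<open>0 < \<epsilon>\<close> by (simp_all add: field_simps)
  obtain d where "d > 0" and remainder: "\<And>\<sigma> i j. \<sigma> \<in> {\<tau><..<\<tau>+d} \<Longrightarrow> i < n \<Longrightarrow> j < n \<Longrightarrow>
      norm (Y \<sigma> i j - Y \<tau> i j - (\<sigma> - \<tau>) *\<^sub>R D i j) \<le> \<delta> * (\<sigma> - \<tau>)"
    using has_vector_derivative_right_remainder[of Y D \<tau> \<delta> n] deriv \<open>0 < \<delta>\<close> by blast
  have "block_accretive n (Y \<sigma>)" if \<sigma>: "\<sigma> \<in> {\<tau><..<\<tau>+d}" for \<sigma>
    unfolding block_accretive_def
  proof
    fix y
    define h where "h = \<sigma> - \<tau>"
    define R where "R i j = Y \<sigma> i j - Y \<tau> i j - h *\<^sub>R D i j" for i j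
    have "0 < h"
      using \<sigma> unfolding h_def by simp
    have "cmod (block_qform n y R) \<le> K * (\<delta> * h) * block_sqnorm n y"
      unfolding K_def R_def h_def using remainder[OF \<sigma>] \<open>0 < \<delta>\<close> \<open>0 < h\<close>
      by (intro norm_block_qform_le) (auto simp: h_def)
    moreover have "K * (\<delta> * h) * block_sqnorm n y \<le> h * (\<epsilon> * block_sqnorm n y)"
      using mult_right_mono[OF K\<delta> block_sqnorm_nonneg[of n y]] \<open>0 < h\<close>
      by (simp add: mult_left_mono mult.left_commute)
    ultimately have "- (h * (\<epsilon> * block_sqnorm n y)) \<le> Re (block_qform n y R)"
      using abs_Re_le_cmod[of "block_qform n y R"] by linarith
    moreover have "Y \<sigma> = (\<lambda>i j. Y \<tau> i j + h *\<^sub>R D i j + R i j)"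
      unfolding R_def by simp
    then have "Re (block_qform n y (Y \<sigma>))
        = Re (block_qform n y (Y \<tau>)) + h * Re (block_qform n y D) + Re (block_qform n y R)"
      by (simp add: block_qform_add block_qform_scaleR)
    moreover have "h * (\<epsilon> * block_sqnorm n y) \<le> h * Re (block_qform n y D)"
      using coercive \<open>0 < h\<close> by simp
    moreover have "0 \<le> Re (block_qform n y (Y \<tau>))"
      using accretive unfolding block_accretive_def by blast
    ultimately show "0 \<le> Re (block_qform n y (Y \<sigma>))"
      by linarith
  qed
  then show ?thesis
    using \<open>d > 0\<close> by blast
qed

lemma completely_positive_shift_lower_bound:
  fixes \<Phi> :: "('d::finite) cmat \<Rightarrow> 'd cmat"
  assumes lin: "clinear_map \<Phi>" and cp: "completely_positive \<Phi>"
    and shifted: "block_accretive n (\<lambda>i j. X i j + c *\<^sub>R block_id i j)" and "0 \<le> c"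
    and bound: "norm (\<Phi> (mat 1)) \<le> p"
  shows "- (c * (of_nat (CARD('d) * CARD('d)) * of_nat n * p) * block_sqnorm n y)
      \<le> Re (block_qform n y (\<lambda>i j. \<Phi> (X i j)))"
proof -
  let ?K = "of_nat (CARD('d) * CARD('d)) * of_nat n :: real"
  have "0 \<le> Re (block_qform n y (\<lambda>i j. \<Phi> (X i j + c *\<^sub>R block_id i j)))"
    using completely_positive_accretive[OF lin cp shifted] unfolding block_accretive_def by blast
  then have "- c * Re (block_qform n y (\<lambda>i j. \<Phi> (block_id i j)))
      \<le> Re (block_qform n y (\<lambda>i j. \<Phi> (X i j)))"
    unfolding clinear_add[OF lin] clinear_scaleR[OF lin] block_qform_add block_qform_scaleR
    by simp
  moreover have "norm (\<Phi> (block_id i j)) \<le> p" for i j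
    using bound order_trans[OF norm_ge_zero bound] by (simp add: block_id_def clinear_0[OF lin])
  then have "Re (block_qform n y (\<lambda>i j. \<Phi> (block_id i j))) \<le> ?K * p * block_sqnorm n y"
    using norm_block_qform_le[of n "\<lambda>i j. \<Phi> (block_id i j)" p y] complex_Re_le_cmod
      bound norm_ge_zero order_trans by blast
  then have "- (c * (?K * p * block_sqnorm n y)) \<le> - c * Re (block_qform n y (\<lambda>i j. \<Phi> (block_id i j)))"
    using \<open>0 \<le> c\<close> by (simp add: mult_left_mono)
  ultimately show ?thesis
    by (simp add: mult.assoc)
qed

section \<open>Complete positivity of the solution\<close>

locale memory_equation =
  fixes P :: "('d::finite) cmat \<Rightarrow> 'd cmat"
    and B :: "real \<Rightarrow> 'd cmat \<Rightarrow> 'd cmat"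
    and V :: "real \<Rightarrow> 'd cmat \<Rightarrow> 'd cmat"
  assumes P_lin: "clinear_map P" and P_cp: "completely_positive P"
    and B_lin: "\<And>t. t \<ge> 0 \<Longrightarrow> clinear_map (B t)"
    and B_cp: "\<And>t. t \<ge> 0 \<Longrightarrow> completely_positive (B t)"
    and B_cont: "\<And>a. continuous_on {0..} (\<lambda>t. B t a)"
    and V_lin: "\<And>t. t \<ge> 0 \<Longrightarrow> clinear_map (V t)"
    and V_eq: "\<And>t a. t \<ge> 0 \<Longrightarrow>
       ((\<lambda>\<tau>. V \<tau> a) has_vector_derivative
          (P (V t a) + integral {0..t} (\<lambda>s. B (t - s) (V s a)))) (at t within {0..})"
    and V_init: "\<And>a. ((\<lambda>t. V t a) \<longlongrightarrow> a) (at_right 0)"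
begin

lemma continuous_on_V: "continuous_on {0..} (\<lambda>t. V t a)"
  unfolding continuous_on_eq_continuous_within
  using V_eq has_vector_derivative_continuous by fastforce

lemma V_0: "V 0 a = a"
proof -
  have "((\<lambda>t. V t a) \<longlongrightarrow> V 0 a) (at 0 within {0..})"
    using continuous_on_V[of a] unfolding continuous_on_def by auto
  then have "((\<lambda>t. V t a) \<longlongrightarrow> V 0 a) (at_right 0)"
    by (rule tendsto_within_subset) auto
  then show ?thesis
    using V_init[of a] tendsto_unique trivial_limit_at_right_real by blast
qed

lemma continuous_on_memory_integrand:
  assumes "0 \<le> t"
  shows "continuous_on {0..t} (\<lambda>s. B (t - s) (V s a))"
proof (rule continuous_on_clinear_family[where B="\<lambda>s. B (t - s)" and f="\<lambda>s. V s a"])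
  show "clinear_map (B (t - s))" if "s \<in> {0..t}" for s
    using that by (intro B_lin) auto
  show "continuous_on {0..t} (\<lambda>s. B (t - s) c)" for c
    by (rule continuous_on_compose2[OF B_cont[of c]]) (auto intro!: continuous_intros)
  show "continuous_on {0..t} (\<lambda>s. V s a)"
    by (rule continuous_on_subset[OF continuous_on_V]) auto
qed

end

text \<open>The barrier \<open>V\<^sub>s(Z) + \<epsilon> e\<^sup>\<lambda>\<^sup>s 1\<close> for an accretive block \<open>Z\<close>: the rate \<open>\<lambda>\<close>
  dominates the negative contributions of \<open>P\<close> and of the memory term on \<open>[0, T]\<close>.\<close>

locale memory_barrier = memory_equation P B V
  for P :: "('d::finite) cmat \<Rightarrow> 'd cmat" and B V +
  fixes n :: nat and Z :: "nat \<Rightarrow> nat \<Rightarrow> 'd cmat" and T b \<epsilon> :: real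
  assumes Z_accretive: "block_accretive n Z"
    and T_nonneg: "0 \<le> T"
    and B_bound: "\<And>r. r \<in> {0..T} \<Longrightarrow> norm (B r (mat 1)) \<le> b"
    and \<epsilon>_pos: "0 < \<epsilon>"
begin

definition K :: real where "K = of_nat (CARD('d) * CARD('d)) * of_nat n"

definition rate :: real where "rate = K * norm (P (mat 1)) + K * b * T + 1"

definition barrier :: "real \<Rightarrow> nat \<Rightarrow> nat \<Rightarrow> 'd cmat" where
  "barrier s = (\<lambda>i j. V s (Z i j) + (\<epsilon> * exp (rate * s)) *\<^sub>R block_id i j)"

definition barrier_deriv :: "real \<Rightarrow> nat \<Rightarrow> nat \<Rightarrow> 'd cmat" where
  "barrier_deriv \<tau> = (\<lambda>i j. P (V \<tau> (Z i j)) + integral {0..\<tau>} (\<lambda>s. B (\<tau> - s) (V s (Z i j)))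
     + (\<epsilon> * exp (rate * \<tau>) * rate) *\<^sub>R block_id i j)"

lemma K_nonneg: "0 \<le> K"
  unfolding K_def by simp

lemma b_nonneg: "0 \<le> b"
  using B_bound[of 0] T_nonneg order_trans[OF norm_ge_zero] by auto

lemma rate_pos: "0 < rate"
  unfolding rate_def using K_nonneg b_nonneg T_nonneg by (simp add: add_nonneg_pos)

lemma block_qform_barrier:
  "block_qform n y (barrier s) = block_qform n y (\<lambda>i j. V s (Z i j))
     + of_real (\<epsilon> * exp (rate * s) * block_sqnorm n y)"
  unfolding barrier_def block_qform_add block_qform_scaleR block_qform_block_id by simp

lemma continuous_on_barrier: "continuous_on {0..} (\<lambda>s. barrier s i j)"
  unfolding barrier_def by (intro continuous_intros continuous_on_V)

lemma barrier_has_derivative: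
  assumes "0 \<le> \<tau>"
  shows "((\<lambda>s. barrier s i j) has_vector_derivative barrier_deriv \<tau> i j) (at \<tau> within {\<tau>..})"
proof -
  have "((\<lambda>s. (\<epsilon> * exp (rate * s)) *\<^sub>R block_id i j) has_vector_derivative
      (\<epsilon> * exp (rate * \<tau>) * rate) *\<^sub>R block_id i j) (at \<tau> within {0..})"
    by (auto intro!: derivative_eq_intros)
  then have "((\<lambda>s. barrier s i j) has_vector_derivative barrier_deriv \<tau> i j) (at \<tau> within {0..})"
    unfolding barrier_def barrier_deriv_def by (intro has_vector_derivative_add V_eq assms)
  then show ?thesis
    by (rule has_vector_derivative_within_subset) (use assms in auto)
qed

lemma barrier_0_accretive: "block_accretive n (barrier 0)"
  unfolding block_accretive_def block_qform_barrier V_0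
proof
  fix y
  have "0 \<le> Re (block_qform n y Z)"
    using Z_accretive unfolding block_accretive_def by blast
  moreover have "0 \<le> \<epsilon> * exp (rate * 0) * block_sqnorm n y"
    using \<epsilon>_pos block_sqnorm_nonneg[of n y] by simp
  ultimately show "0 \<le> Re (block_qform n y (\<lambda>i j. Z i j)
      + of_real (\<epsilon> * exp (rate * 0) * block_sqnorm n y))"
    by simp
qed

lemma barrier_accretive_closed:
  assumes "0 < \<tau>" and below: "\<forall>s\<in>{0..<\<tau>}. block_accretive n (barrier s)"
  shows "block_accretive n (barrier \<tau>)"
  unfolding block_accretive_def
proof
  fix y
  have closure: "closure {0..<\<tau>} = {0..\<tau>}"
    using \<open>0 < \<tau>\<close> by simp
  have "continuous_on {0..\<tau>} (\<lambda>s. Re (block_qform n y (barrier s)))"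
    by (intro continuous_on_Re continuous_on_block_qform continuous_on_subset[OF continuous_on_barrier])
       auto
  moreover have "0 \<le> Re (block_qform n y (barrier s))" if "s \<in> {0..<\<tau>}" for s
    using below that unfolding block_accretive_def by blast
  ultimately show "0 \<le> Re (block_qform n y (barrier \<tau>))"
    using continuous_ge_on_closure[where S="{0..<\<tau>}" and x=\<tau> and a=0
        and f="\<lambda>s. Re (block_qform n y (barrier s))", unfolded closure]
      \<open>0 < \<tau>\<close> by simp
qed

lemma P_term_lower_bound:
  assumes "0 \<le> \<tau>" and "block_accretive n (barrier \<tau>)"
  shows "- (\<epsilon> * exp (rate * \<tau>) * (K * norm (P (mat 1))) * block_sqnorm n y)
    \<le> Re (block_qform n y (\<lambda>i j. P (V \<tau> (Z i j))))"
  unfolding K_def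
  by (rule completely_positive_shift_lower_bound[OF P_lin P_cp])
     (use assms \<epsilon>_pos in \<open>auto simp: barrier_def\<close>)

lemma memory_term_lower_bound:
  assumes \<tau>: "\<tau> \<in> {0..T}" and accretive: "\<forall>s\<in>{0..\<tau>}. block_accretive n (barrier s)"
  shows "- (T * (\<epsilon> * exp (rate * \<tau>) * (K * b) * block_sqnorm n y))
    \<le> Re (block_qform n y (\<lambda>i j. integral {0..\<tau>} (\<lambda>s. B (\<tau> - s) (V s (Z i j)))))"
proof -
  define c where "c = \<epsilon> * exp (rate * \<tau>) * (K * b) * block_sqnorm n y"
  have "0 \<le> c"
    unfolding c_def using \<epsilon>_pos K_nonneg b_nonneg block_sqnorm_nonneg
    by (intro mult_nonneg_nonneg) auto
  have "\<tau> * (- c) \<le> Re (block_qform n y (\<lambda>i j. integral {0..\<tau>} (\<lambda>s. B (\<tau> - s) (V s (Z i j)))))"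
  proof (rule block_qform_integral_lower_bound)
    fix s assume s: "s \<in> {0..\<tau>}"
    have "\<epsilon> * exp (rate * s) \<le> \<epsilon> * exp (rate * \<tau>)"
      using s \<epsilon>_pos rate_pos by (simp add: mult_left_mono)
    then have "\<epsilon> * exp (rate * s) * (K * b * block_sqnorm n y) \<le> \<epsilon> * exp (rate * \<tau>) * (K * b * block_sqnorm n y)"
      using K_nonneg b_nonneg block_sqnorm_nonneg by (intro mult_right_mono mult_nonneg_nonneg) auto
    then have "- c \<le> - (\<epsilon> * exp (rate * s) * (K * b) * block_sqnorm n y)"
      unfolding c_def by (simp add: mult.assoc)
    also have "\<dots> \<le> Re (block_qform n y (\<lambda>i j. B (\<tau> - s) (V s (Z i j))))"
      unfolding K_def
      by (rule completely_positive_shift_lower_bound[OF B_lin B_cp])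
         (use accretive s \<tau> B_bound \<epsilon>_pos in \<open>auto simp: barrier_def\<close>)
    finally show "- c \<le> Re (block_qform n y (\<lambda>i j. B (\<tau> - s) (V s (Z i j))))" .
  qed (use \<tau> continuous_on_memory_integrand in auto)
  moreover have "\<tau> * c \<le> T * c"
    using \<tau> \<open>0 \<le> c\<close> by (intro mult_right_mono) auto
  ultimately show ?thesis
    unfolding c_def by linarith
qed

lemma barrier_deriv_coercive:
  assumes \<tau>: "\<tau> \<in> {0..T}" and accretive: "\<forall>s\<in>{0..\<tau>}. block_accretive n (barrier s)"
  shows "\<epsilon> * block_sqnorm n y \<le> Re (block_qform n y (barrier_deriv \<tau>))"
proof -
  define c where "c = \<epsilon> * exp (rate * \<tau>)"
  define N where "N = block_sqnorm n y"
  have "Re (block_qform n y (barrier_deriv \<tau>))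
      = Re (block_qform n y (\<lambda>i j. P (V \<tau> (Z i j))))
        + Re (block_qform n y (\<lambda>i j. integral {0..\<tau>} (\<lambda>s. B (\<tau> - s) (V s (Z i j)))))
        + c * rate * N"
    unfolding barrier_deriv_def block_qform_add block_qform_scaleR block_qform_block_id c_def N_def
    by simp
  moreover have "c * rate * N = c * (K * norm (P (mat 1))) * N + T * (c * (K * b) * N) + c * N"
    unfolding rate_def by (simp add: algebra_simps)
  moreover have "\<epsilon> \<le> c"
    unfolding c_def using \<tau> rate_pos \<epsilon>_pos by simp
  then have "\<epsilon> * N \<le> c * N"
    unfolding N_def using block_sqnorm_nonneg by (rule mult_right_mono)
  ultimately show ?thesis
    using P_term_lower_bound[of \<tau> y] memory_term_lower_bound[OF \<tau> accretive, of y] \<tau> accretive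
    unfolding c_def N_def by auto
qed

lemma barrier_accretive: "\<forall>s\<in>{0..T}. block_accretive n (barrier s)"
proof (rule real_interval_induction[where P="\<lambda>s. block_accretive n (barrier s)",
      OF T_nonneg barrier_0_accretive])
  show "block_accretive n (barrier \<tau>)"
    if "0 < \<tau>" "\<tau> \<le> T" and "\<forall>s\<in>{0..<\<tau>}. block_accretive n (barrier s)" for \<tau>
    using barrier_accretive_closed that by blast
  show "\<exists>d>0. \<forall>s\<in>{\<tau><..<\<tau> + d}. block_accretive n (barrier s)"
    if "0 \<le> \<tau>" "\<tau> < T" and up_to: "\<forall>s\<in>{0..\<tau>}. block_accretive n (barrier s)" for \<tau>
  proof (rule block_accretive_right_of[OF barrier_has_derivative[OF \<open>0 \<le> \<tau>\<close>] _ _ \<epsilon>_pos])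
    show "block_accretive n (barrier \<tau>)"
      using up_to \<open>0 \<le> \<tau>\<close> by simp
    show "\<epsilon> * block_sqnorm n y \<le> Re (block_qform n y (barrier_deriv \<tau>))" for y
      using barrier_deriv_coercive up_to \<open>0 \<le> \<tau>\<close> \<open>\<tau> < T\<close> by simp
  qed
qed

end

context memory_equation
begin

lemma B_bounded_on_interval:
  obtains b where "\<And>r. r \<in> {0..t} \<Longrightarrow> norm (B r a) \<le> b"
proof -
  have "compact ((\<lambda>r. B r a) ` {0..t})"
    by (intro compact_continuous_image compact_Icc continuous_on_subset[OF B_cont]) auto
  then show ?thesis
    using that compact_imp_bounded bounded_iff by (metis image_eqI)
qed

text \<open>Let \<open>\<epsilon> \<rightarrow> 0\<close> in the barrier; its rate does not depend on \<open>\<epsilon>\<close>.\<close>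

lemma completely_positive_V:
  assumes "0 \<le> t"
  shows "completely_positive (V t)"
proof (rule completely_positive_if_preserves_accretive[OF V_lin[OF assms]])
  fix n and Z :: "nat \<Rightarrow> nat \<Rightarrow> 'd cmat"
  assume Z: "block_accretive n Z"
  obtain b where b: "\<And>r. r \<in> {0..t} \<Longrightarrow> norm (B r (mat 1)) \<le> b"
    by (rule B_bounded_on_interval[of t "mat 1"]) blast
  show "block_accretive n (\<lambda>i j. V t (Z i j))"
    unfolding block_accretive_def
  proof
    fix y
    let ?q = "Re (block_qform n y (\<lambda>i j. V t (Z i j)))"
    define C where "C = exp ((of_nat (CARD('d) * CARD('d)) * of_nat n * norm (P (mat 1))
      + of_nat (CARD('d) * CARD('d)) * of_nat n * b * t + 1) * t) * block_sqnorm n y"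
    have "0 \<le> C"
      unfolding C_def by (simp add: block_sqnorm_nonneg)
    have barrier: "0 \<le> ?q + \<epsilon> * C" if "0 < \<epsilon>" for \<epsilon>
    proof -
      interpret memory_barrier P B V n Z t b \<epsilon>
        using Z assms b that by unfold_locales
      show ?thesis
        using barrier_accretive assms
        unfolding block_accretive_def block_qform_barrier C_def rate_def K_def
        by (simp add: mult.assoc)
    qed
    show "0 \<le> ?q"
    proof (rule field_le_epsilon)
      fix e :: real
      assume "0 < e"
      then have "0 < e / (C + 1)"
        using \<open>0 \<le> C\<close> by simp
      then have "0 \<le> ?q + e / (C + 1) * C"
        by (rule barrier)
      moreover have "e / (C + 1) * C \<le> e"
        using \<open>0 < e\<close> \<open>0 \<le> C\<close> by (simp add: field_simps)
      ultimately show "0 \<le> ?q + e"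
        by linarith
    qed
  qed
qed

end

theorem mainTheorem2:
  fixes P :: "('d::finite) cmat \<Rightarrow> 'd cmat"
    and B :: "real \<Rightarrow> 'd cmat \<Rightarrow> 'd cmat"
    and V :: "real \<Rightarrow> 'd cmat \<Rightarrow> 'd cmat"
  assumes P_lin: "clinear_map P" and P_cp: "completely_positive P"
    and B_lin: "\<And>t. t \<ge> 0 \<Longrightarrow> clinear_map (B t)"
    and B_cp: "\<And>t. t \<ge> 0 \<Longrightarrow> completely_positive (B t)"
    and B_cont: "\<And>a. continuous_on {0..} (\<lambda>t. B t a)"
    and V_lin: "\<And>t. t \<ge> 0 \<Longrightarrow> clinear_map (V t)"
    and V_eq: "\<And>t a. t \<ge> 0 \<Longrightarrow>
       ((\<lambda>\<tau>. V \<tau> a) has_vector_derivative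
          (P (V t a) + integral {0..t} (\<lambda>s. B (t - s) (V s a)))) (at t within {0..})"
    and V_init: "\<And>a. ((\<lambda>t. V t a) \<longlongrightarrow> a) (at_right 0)"
  shows "(\<forall>t\<ge>0. completely_positive (V t)) \<and>
         ((\<forall>t\<ge>0. pos_def (V t (mat 1))) \<longrightarrow>
            (\<forall>t\<ge>0. completely_positive
                      (\<lambda>a. inv_sqrt (V t (mat 1)) ** V t a ** inv_sqrt (V t (mat 1))) \<and>
                    inv_sqrt (V t (mat 1)) ** V t (mat 1) ** inv_sqrt (V t (mat 1)) = mat 1))"
proof -
  interpret memory_equation P B V
    using assms by unfold_locales
  have "completely_positive (\<lambda>a. inv_sqrt (V t (mat 1)) ** V t a ** inv_sqrt (V t (mat 1)))"
    if "pos_def (V t (mat 1))" and "0 \<le> t" for t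
    using completely_positive_congruence[OF completely_positive_V[OF that(2)]]
      inv_sqrt_pos_def(1)[OF that(1)] unfolding hermitian_def by metis
  then show ?thesis
    using completely_positive_V inv_sqrt_pos_def(2) by blast
qed

end
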